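(* Let $H\in\mathbb R^{n\times n}$, $f\in\mathbb R^n$, $A\in\mathbb R^{m\times n}$, $b\in\mathbb R^m$, with $\mathcal X=\{x\in\mathbb R^n: Ax\le b\}$ nonempty and $H+H^\top$ positive definite. Let $x^*$ be the unique solution of the affine variational inequality: find $x\in\mathcal X$ with $(Hx+f)^\top(y-x)\ge 0$ for all $y\in\mathcal X$. Then the sequence $\{z_k\}$ generated by the DR-DAQP algorithm (described in the context) converges to $x^*$.
   Context: Notation: $A_i$, $b_i$ denote the $i$-th row of $A$ and entry of $b$; for an index set $\mathcal S$, $A_{\mathcal S}$, $b_{\mathcal S}$, $\lambda_{\mathcal S}$ denote the corresponding submatrix/subvectors. Fix $\rho>0$, set $H_s=\tfrac12(H+H^\top)$, $\tilde H=\rho I+H_s$, and for $z\in\mathbb R^n$ let $\tilde f(z)=f+(H-\tilde H)z$. For a parameter $z$, let $\mathrm{QP}(z)$ denote the strictly convex quadratic program $\min_x \tfrac12 x^\top\tilde Hx+\tilde f(z)^\top x$ subject to $Ax\le b$; its active set at the minimizer $y$ is $\{i: A_iy=b_i\}$. DR-DAQP algorithm: start from an initial $z_0\in\mathbb R^n$, set $\delta=\infty$, and let $\mathcal A_{-1}$ be undefined (so the test below fails at $k=0$). For $k=0,1,2,\dots$: 1. Let $y_k$ be the solution of $\mathrm{QP}(z_k)$ and $\mathcal A_k$ its active set. 2. If $\mathcal A_k=\mathcal A_{k-1}$: let $(\tilde z_k,\lambda_k)$ solve the linear system $\begin{bmatrix}H & A_{\mathcal A_k}^\top\\ A_{\mathcal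 A_k} & 0\end{bmatrix}\begin{bmatrix}x\\ \lambda\end{bmatrix}=\begin{bmatrix}-f\\ b_{\mathcal A_k}\end{bmatrix}$. If $\lambda_k\ge 0$ and $A\tilde z_k\le b$, stop and return $(\tilde z_k,\lambda_k)$. Otherwise, let $\tilde y_k$ be the solution of $\mathrm{QP}(\tilde z_k)$ and redefine $\mathcal A_k$ as its active set; if $\|\tilde y_k-\tilde z_k\|<\delta$, replace $y_k\leftarrow\tilde y_k$, $z_k\leftarrow\tilde z_k$, and set $\delta\leftarrow\|\tilde y_k-\tilde z_k\|$. 3. Set $z_{k+1}=(\rho I+H)^{-1}\big(\rho y_k+Hz_k+\tfrac{1}{2}H_s(y_k-z_k)\big)$. The algorithm iterates indefinitely unless it stops in step 2. *)

theory Defs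
  imports "HOL-Analysis.Analysis"
begin

definition feasible :: "real^'n^'m \<Rightarrow> real^'m \<Rightarrow> real^'n \<Rightarrow> bool" where
  "feasible A b x \<longleftrightarrow> (\<forall>i. (A *v x) $ i \<le> b $ i)"

definition active_set :: "real^'n^'m \<Rightarrow> real^'m \<Rightarrow> real^'n \<Rightarrow> 'm set" where
  "active_set A b x = {i. (A *v x) $ i = b $ i}"

definition Hsym :: "real^'n^'n \<Rightarrow> real^'n^'n" where
  "Hsym H = (1/2) *\<^sub>R (H + transpose H)"

definition Htil :: "real \<Rightarrow> real^'n^'n \<Rightarrow> real^'n^'n" where
  "Htil \<rho> H = \<rho> *\<^sub>R mat 1 + Hsym H"

definition ftil :: "real \<Rightarrow> real^'n^'n \<Rightarrow> real^'n \<Rightarrow> real^'n \<Rightarrow> real^'n" where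
  "ftil \<rho> H f z = f + (H - Htil \<rho> H) *v z"

definition qp_min :: "real^'n^'n \<Rightarrow> real^'n \<Rightarrow> real^'n^'m \<Rightarrow> real^'m \<Rightarrow> real
    \<Rightarrow> real^'n \<Rightarrow> real^'n \<Rightarrow> bool" where
  "qp_min H f A b \<rho> z y \<longleftrightarrow> feasible A b y \<and>
     (\<forall>x. feasible A b x \<longrightarrow>
        (1/2) * (y \<bullet> (Htil \<rho> H *v y)) + ftil \<rho> H f z \<bullet> y
          \<le> (1/2) * (x \<bullet> (Htil \<rho> H *v x)) + ftil \<rho> H f z \<bullet> x)"

text \<open>(x, \<lambda>) solves [H A_S'; A_S 0][x; \<lambda>_S] = [-f; b_S]; the multiplier vector
  \<lambda> :: real^'m is zero outside S, so that A' \<lambda> = A_S' \<lambda>_S.\<close>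
definition kkt_sol :: "real^'n^'n \<Rightarrow> real^'n \<Rightarrow> real^'n^'m \<Rightarrow> real^'m \<Rightarrow> 'm set
    \<Rightarrow> real^'n \<Rightarrow> real^'m \<Rightarrow> bool" where
  "kkt_sol H f A b S x lam \<longleftrightarrow> (\<forall>i. i \<notin> S \<longrightarrow> lam $ i = 0) \<and>
     H *v x + transpose A *v lam = - f \<and> (\<forall>i\<in>S. (A *v x) $ i = b $ i)"

definition stop_test :: "real^'n^'m \<Rightarrow> real^'m \<Rightarrow> 'm set \<Rightarrow> real^'n \<Rightarrow> real^'m \<Rightarrow> bool" where
  "stop_test A b S zt lam \<longleftrightarrow> (\<forall>i\<in>S. lam $ i \<ge> 0) \<and> feasible A b zt"

definition z_update :: "real^'n^'n \<Rightarrow> real \<Rightarrow> real^'n \<Rightarrow> real^'n \<Rightarrow> real^'n" where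
  "z_update H \<rho> y z = matrix_inv (\<rho> *\<^sub>R mat 1 + H) *v
      (\<rho> *\<^sub>R y + H *v z + (1/2) *\<^sub>R (Hsym H *v (y - z)))"

text \<open>One non-stopping iteration k of DR-DAQP.
  Inputs: previous active set Aprev (None at k = 0), the iterate zin at the start of
  the iteration, current \<delta>.  Outputs: final y_k, final z_k (after possible replacement),
  final active set A_k, new \<delta>, and z_{k+1}.\<close>
definition drdaqp_iter :: "real^'n^'n \<Rightarrow> real^'n \<Rightarrow> real^'n^'m \<Rightarrow> real^'m \<Rightarrow> real
    \<Rightarrow> 'm set option \<Rightarrow> real^'n \<Rightarrow> ereal
    \<Rightarrow> real^'n \<Rightarrow> real^'n \<Rightarrow> 'm set \<Rightarrow> ereal \<Rightarrow> real^'n \<Rightarrow> bool" where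
  "drdaqp_iter H f A b \<rho> Aprev zin \<delta>in y z Act \<delta>out znext \<longleftrightarrow>
     (\<exists>y0. qp_min H f A b \<rho> zin y0 \<and>
        (if Aprev = Some (active_set A b y0) then
           (\<exists>zt lam yt. kkt_sol H f A b (active_set A b y0) zt lam \<and>
              \<not> stop_test A b (active_set A b y0) zt lam \<and>
              qp_min H f A b \<rho> zt yt \<and> Act = active_set A b yt \<and>
              (if ereal (norm (yt - zt)) < \<delta>in
               then y = yt \<and> z = zt \<and> \<delta>out = ereal (norm (yt - zt))
               else y = y0 \<and> z = zin \<and> \<delta>out = \<delta>in))
         else y = y0 \<and> z = zin \<and> Act = active_set A b y0 \<and> \<delta>out = \<delta>in)) \<and>
     znext = z_update H \<rho> y z"

definition drdaqp_stop :: "real^'n^'n \<Rightarrow> real^'n \<Rightarrow> real^'n^'m \<Rightarrow> real^'m \<Rightarrow> real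
    \<Rightarrow> 'm set option \<Rightarrow> real^'n \<Rightarrow> real^'n \<Rightarrow> real^'m \<Rightarrow> bool" where
  "drdaqp_stop H f A b \<rho> Aprev zin zt lam \<longleftrightarrow>
     (\<exists>y0. qp_min H f A b \<rho> zin y0 \<and> Aprev = Some (active_set A b y0) \<and>
        kkt_sol H f A b (active_set A b y0) zt lam \<and>
        stop_test A b (active_set A b y0) zt lam)"

text \<open>The first K iterations of a run are valid, non-stopping iterations, chained together;
  zin k is the iterate at the start of iteration k (zin 0 = z_0 arbitrary), z k the final
  value of z_k, \<delta> 0 = \<infinity>.\<close>
definition drdaqp_prefix :: "real^'n^'n \<Rightarrow> real^'n \<Rightarrow> real^'n^'m \<Rightarrow> real^'m \<Rightarrow> real \<Rightarrow> nat
    \<Rightarrow> (nat \<Rightarrow> real^'n) \<Rightarrow> (nat \<Rightarrow> real^'n) \<Rightarrow> (nat \<Rightarrow> real^'n) \<Rightarrow> (nat \<Rightarrow> 'm set)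
    \<Rightarrow> (nat \<Rightarrow> ereal) \<Rightarrow> bool" where
  "drdaqp_prefix H f A b \<rho> K zin y z Act \<delta> \<longleftrightarrow> \<delta> 0 = \<infinity> \<and>
     (\<forall>k<K. drdaqp_iter H f A b \<rho> (if k = 0 then None else Some (Act (k - 1)))
              (zin k) (\<delta> k) (y k) (z k) (Act k) (\<delta> (Suc k)) (zin (Suc k)))"

end

(*
  Away from the refinement of step 2, DR-DAQP is a Douglas-Rachford iteration: with
  M = rho I + H and R = rho I + H_s / 2, step 3 reads M z_{k+1} = M z_k + R (y_k - z_k).
  Testing the optimality condition of QP(z_k) with xstar and the variational inequality
  of xstar with y_k shows that V(z) = (M (z - xstar))' R^-1 (M (z - xstar)) drops by at
  least (z_k - xstar)' H (z_k - xstar) >= mu |z_k - xstar|^2 in every plain step, which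
  forces z_k --> xstar.  A refinement replaces z_k only if the residual |y~ - z~| falls
  strictly below the best residual so far; since z~ is the unique KKT point of one of
  finitely many active sets and y~ is determined by z~, this happens only finitely often.
  If the algorithm stops, the returned z~ satisfies the KKT conditions of the variational
  inequality, hence equals xstar.
*)
theory Submission
  imports Defs
begin

section \<open>Positive definite matrices\<close>

definition pos_semidef :: "real^'n^'n \<Rightarrow> bool" where
  "pos_semidef P \<longleftrightarrow> (\<forall>x. 0 \<le> x \<bullet> (P *v x))"

definition pos_def :: "real^'n^'n \<Rightarrow> bool" where
  "pos_def P \<longleftrightarrow> (\<forall>x. x \<noteq> 0 \<longrightarrow> 0 < x \<bullet> (P *v x))"

lemma pos_def_imp_pos_semidef: "pos_def P \<Longrightarrow> pos_semidef P"
  unfolding pos_def_def pos_semidef_def by (metis inner_zero_left order.strict_implies_order order_refl)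

lemma inner_transpose_matrix_vector: "(x::real^'n) \<bullet> (transpose P *v y) = (P *v x) \<bullet> y"
  by (metis dot_lmul_matrix inner_commute transpose_matrix_vector)

lemma inner_scaled_identity_plus:
  "(x::real^'n) \<bullet> ((c *\<^sub>R mat 1 + P) *v y) = c * (x \<bullet> y) + x \<bullet> (P *v y)"
  by (simp add: matrix_vector_mult_add_rdistrib inner_add_right flip: scaleR_matrix_vector_assoc)

lemma inner_Hsym: "x \<bullet> (Hsym H *v y) = (x \<bullet> (H *v y) + y \<bullet> (H *v x)) / 2"
  unfolding Hsym_def
  by (simp add: matrix_vector_mult_add_rdistrib inner_add_right inner_transpose_matrix_vector
      inner_commute[of "H *v x"] flip: scaleR_matrix_vector_assoc del: transpose_matrix_vector)

lemma pos_def_of_symmetric_part: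
  assumes "pos_def (H + transpose H)" shows "pos_def H"
proof -
  have "x \<bullet> ((H + transpose H) *v x) = 2 * (x \<bullet> (H *v x))" for x
    by (simp add: matrix_vector_mult_add_rdistrib inner_add_right inner_transpose_matrix_vector
        inner_commute del: transpose_matrix_vector)
  then show ?thesis using assms unfolding pos_def_def by simp
qed

lemma pos_semidef_Hsym: "pos_semidef H \<Longrightarrow> pos_semidef (Hsym H)"
  unfolding pos_semidef_def by (simp add: inner_Hsym)

lemma pos_semidef_scaleR: "0 \<le> c \<Longrightarrow> pos_semidef P \<Longrightarrow> pos_semidef (c *\<^sub>R P)"
  unfolding pos_semidef_def by (simp flip: scaleR_matrix_vector_assoc)

lemma pos_def_scaled_identity_plus:
  assumes "0 < c" "pos_semidef P" shows "pos_def (c *\<^sub>R mat 1 + P)"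
  using assms unfolding pos_def_def pos_semidef_def
  by (simp add: inner_scaled_identity_plus add_pos_nonneg)

lemma pos_def_imp_invertible:
  assumes "pos_def P" shows "invertible P"
proof -
  have "P *v x = 0 \<Longrightarrow> x = 0" for x
    using assms unfolding pos_def_def by (metis inner_zero_right less_irrefl)
  then show ?thesis
    using matrix_left_invertible_ker invertible_left_inverse by blast
qed

lemma matrix_inv_cancel:
  fixes P :: "real^'n^'n"
  assumes "invertible P"
  shows "P *v (matrix_inv P *v x) = x" and "matrix_inv P *v (P *v x) = x"
proof -
  have "P ** matrix_inv P = mat 1 \<and> matrix_inv P ** P = mat 1"
    using assms unfolding matrix_inv_def invertible_def by (rule someI_ex)
  then show "P *v (matrix_inv P *v x) = x" and "matrix_inv P *v (P *v x) = x"
    by (simp_all add: matrix_vector_mul_assoc)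
qed

lemma pos_def_coercive:
  assumes "pos_def P"
  obtains \<mu> where "0 < \<mu>" "\<And>x. \<mu> * (norm x)\<^sup>2 \<le> x \<bullet> (P *v x)"
proof -
  have "continuous_on (sphere 0 1) (\<lambda>x. x \<bullet> (P *v x))"
    by (intro continuous_on_inner continuous_on_id linear_continuous_on matrix_vector_mul_bounded_linear)
  then obtain x0 where x0: "x0 \<in> sphere 0 1"
    and min: "\<And>x. x \<in> sphere 0 1 \<Longrightarrow> x0 \<bullet> (P *v x0) \<le> x \<bullet> (P *v x)"
    using continuous_attains_inf[OF compact_sphere, of 0 1] sphere_eq_empty by fastforce
  show ?thesis
  proof
    show "0 < x0 \<bullet> (P *v x0)"
      using assms x0 unfolding pos_def_def by (metis norm_zero zero_neq_one mem_sphere_0)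
    fix x :: "real^'a"
    show "x0 \<bullet> (P *v x0) * (norm x)\<^sup>2 \<le> x \<bullet> (P *v x)"
    proof (cases "x = 0")
      case False
      then have "x0 \<bullet> (P *v x0) \<le> (x /\<^sub>R norm x) \<bullet> (P *v (x /\<^sub>R norm x))" by (intro min) simp
      also have "\<dots> = (x \<bullet> (P *v x)) / (norm x)\<^sup>2"
        by (simp add: matrix_vector_mult_scaleR power2_eq_square divide_inverse)
      finally show ?thesis using False by (simp add: field_simps)
    qed simp
  qed
qed

lemma inverse_quadratic_form_nonneg:
  assumes "pos_semidef R" "invertible R"
  shows "0 \<le> p \<bullet> (matrix_inv R *v p)"
  using assms(1) matrix_inv_cancel(1)[OF assms(2), of p] unfolding pos_semidef_def
  by (metis inner_commute)

lemma inverse_quadratic_form_shift: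
  fixes R :: "real^'n^'n"
  assumes "transpose R = R" "invertible R"
  shows "(p + R *v w) \<bullet> (matrix_inv R *v (p + R *v w))
    = p \<bullet> (matrix_inv R *v p) + 2 * (p \<bullet> w) + w \<bullet> (R *v w)"
proof -
  have "(R *v w) \<bullet> (matrix_inv R *v p) = w \<bullet> p"
    using inner_transpose_matrix_vector[of w R "matrix_inv R *v p"] assms
    by (simp add: matrix_inv_cancel inner_commute del: transpose_matrix_vector)
  then show ?thesis
    by (simp add: matrix_vector_right_distrib matrix_inv_cancel[OF assms(2)] inner_add_left
        inner_add_right inner_commute)
qed

section \<open>Affine variational inequalities and the subproblems\<close>

definition avi_solution :: "real^'n^'n \<Rightarrow> real^'n \<Rightarrow> (real^'n) set \<Rightarrow> real^'n \<Rightarrow> bool" where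
  "avi_solution P c S x \<longleftrightarrow> x \<in> S \<and> (\<forall>y\<in>S. 0 \<le> (P *v x + c) \<bullet> (y - x))"

lemma avi_solution_unique:
  assumes "pos_def P" "avi_solution P c S x1" "avi_solution P c S x2"
  shows "x1 = x2"
proof (rule ccontr)
  assume "x1 \<noteq> x2"
  then have "0 < (x1 - x2) \<bullet> (P *v (x1 - x2))" using assms(1) unfolding pos_def_def by simp
  moreover have "0 \<le> (P *v x1 + c) \<bullet> (x2 - x1)" "0 \<le> (P *v x2 + c) \<bullet> (x1 - x2)"
    using assms(2,3) unfolding avi_solution_def by blast+
  ultimately show False
    by (simp add: matrix_vector_mult_diff_distrib inner_diff_left inner_diff_right inner_add_right
        inner_commute)
qed

lemma convex_feasible: "convex {x. feasible A b x}"
proof -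
  have "{x. feasible A b x} = (\<Inter>i. {x. (A *v x) $ i \<le> b $ i})" unfolding feasible_def by blast
  moreover have "convex {x. (A *v x) $ i \<le> b $ i}" for i
    by (simp add: convex_halfspace_le matrix_vector_mul_component)
  ultimately show ?thesis by (simp add: convex_INT)
qed

lemma nonneg_slope_of_local_min:
  fixes g a :: real
  assumes "\<And>t. 0 < t \<Longrightarrow> t \<le> 1 \<Longrightarrow> 0 \<le> t * g + t\<^sup>2 / 2 * a"
  shows "0 \<le> g"
proof (rule tendsto_lowerbound)
  show "((\<lambda>t. g + t / 2 * a) \<longlongrightarrow> g) (at_right 0)"
    by (auto intro!: tendsto_eq_intros)
  show "\<forall>\<^sub>F t in at_right 0. 0 \<le> g + t / 2 * a"
    unfolding eventually_at_right_field
  proof (intro exI[of _ 1] conjI allI impI)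
    fix t :: real assume "0 < t" "t < 1"
    then have "0 \<le> t * (g + t / 2 * a)"
      using assms[of t] by (simp add: power2_eq_square algebra_simps)
    then show "0 \<le> g + t / 2 * a" using \<open>0 < t\<close> by (simp add: zero_le_mult_iff)
  qed simp
qed simp

lemma quadratic_min_imp_avi_solution:
  fixes P :: "real^'n^'n"
  assumes sym: "transpose P = P" and "convex S" "y \<in> S"
    and min: "\<And>x. x \<in> S \<Longrightarrow> (1/2) * (y \<bullet> (P *v y)) + c \<bullet> y \<le> (1/2) * (x \<bullet> (P *v x)) + c \<bullet> x"
  shows "avi_solution P c S y"
  unfolding avi_solution_def
proof (intro conjI ballI)
  fix x assume "x \<in> S"
  define d where "d = x - y"
  have expand: "(1/2) * ((y + t *\<^sub>R d) \<bullet> (P *v (y + t *\<^sub>R d))) + c \<bullet> (y + t *\<^sub>R d)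
      = (1/2) * (y \<bullet> (P *v y)) + c \<bullet> y + t * ((P *v y + c) \<bullet> d) + t\<^sup>2 / 2 * (d \<bullet> (P *v d))" for t
  proof -
    have "y \<bullet> (P *v d) = d \<bullet> (P *v y)"
      using inner_transpose_matrix_vector[of d P y] sym
      by (simp add: inner_commute del: transpose_matrix_vector)
    then show ?thesis
      by (simp add: matrix_vector_right_distrib matrix_vector_mult_scaleR inner_add_left inner_add_right
          inner_commute power2_eq_square algebra_simps)
  qed
  have "0 \<le> t * ((P *v y + c) \<bullet> d) + t\<^sup>2 / 2 * (d \<bullet> (P *v d))" if "0 < t" "t \<le> 1" for t
  proof -
    have "y + t *\<^sub>R d \<in> S"
      using convexD_alt[OF \<open>convex S\<close> \<open>y \<in> S\<close> \<open>x \<in> S\<close>, of t] that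
      by (simp add: d_def algebra_simps)
    then show ?thesis using min[of "y + t *\<^sub>R d"] unfolding expand by simp
  qed
  then show "0 \<le> (P *v y + c) \<bullet> (x - y)"
    unfolding d_def[symmetric] by (rule nonneg_slope_of_local_min)
qed (fact \<open>y \<in> S\<close>)

lemma transpose_Htil: "transpose (Htil \<rho> H) = Htil \<rho> H"
  by (simp add: Htil_def Hsym_def transpose_def mat_def vec_eq_iff)

lemma pos_def_Htil: "0 < \<rho> \<Longrightarrow> pos_semidef H \<Longrightarrow> pos_def (Htil \<rho> H)"
  unfolding Htil_def by (intro pos_def_scaled_identity_plus pos_semidef_Hsym)

lemma qp_min_imp_avi_solution:
  assumes "qp_min H f A b \<rho> z y"
  shows "avi_solution (Htil \<rho> H) (ftil \<rho> H f z) {x. feasible A b x} y"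
  using assms unfolding qp_min_def
  by (intro quadratic_min_imp_avi_solution transpose_Htil convex_feasible) auto

lemma qp_min_unique:
  assumes "0 < \<rho>" "pos_semidef H" "qp_min H f A b \<rho> z y1" "qp_min H f A b \<rho> z y2"
  shows "y1 = y2"
  using assms by (metis avi_solution_unique qp_min_imp_avi_solution pos_def_Htil)

lemma kkt_sol_unique:
  assumes "pos_def H" "kkt_sol H f A b S x1 l1" "kkt_sol H f A b S x2 l2"
  shows "x1 = x2"
proof (rule ccontr)
  assume "x1 \<noteq> x2"
  define d where "d = x1 - x2"
  define m where "m = l1 - l2"
  have stationary: "H *v d + transpose A *v m = 0"
    using assms(2,3) unfolding kkt_sol_def d_def m_def
    by (simp add: matrix_vector_mult_diff_distrib algebra_simps)
  have "(A *v d) \<bullet> m = 0"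
    unfolding inner_vec_def
  proof (rule sum.neutral, rule ballI)
    fix i
    show "(A *v d) $ i \<bullet> m $ i = 0"
      using assms(2,3) unfolding kkt_sol_def d_def m_def
      by (cases "i \<in> S") (simp_all add: matrix_vector_mult_diff_distrib)
  qed
  then have "d \<bullet> (H *v d) = 0"
    using arg_cong[OF stationary, of "\<lambda>v. d \<bullet> v"]
    by (simp add: inner_add_right inner_transpose_matrix_vector del: transpose_matrix_vector)
  with \<open>x1 \<noteq> x2\<close> show False
    using assms(1) unfolding pos_def_def d_def by (metis less_irrefl right_minus_eq)
qed

lemma kkt_stop_imp_avi_solution:
  assumes kkt: "kkt_sol H f A b S x lam" and stop: "stop_test A b S x lam"
  shows "avi_solution H f {x. feasible A b x} x"
  unfolding avi_solution_def
proof (intro conjI ballI)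
  show "x \<in> {x. feasible A b x}" using stop unfolding stop_test_def by simp
  fix y assume y: "y \<in> {x. feasible A b x}"
  have "H *v x + f = - (transpose A *v lam)"
    using kkt unfolding kkt_sol_def by (simp add: algebra_simps eq_neg_iff_add_eq_0)
  moreover have "(A *v (y - x)) \<bullet> lam \<le> 0"
    unfolding inner_vec_def
  proof (rule sum_nonpos)
    fix i
    show "(A *v (y - x)) $ i \<bullet> lam $ i \<le> 0"
    proof (cases "i \<in> S")
      case True
      then have "(A *v x) $ i = b $ i" "0 \<le> lam $ i" "(A *v y) $ i \<le> b $ i"
        using kkt stop y unfolding kkt_sol_def stop_test_def feasible_def by auto
      then show ?thesis by (simp add: matrix_vector_mult_diff_distrib mult_nonpos_nonneg)
    qed (use kkt in \<open>simp add: kkt_sol_def\<close>)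
  qed
  ultimately show "0 \<le> (H *v x + f) \<bullet> (y - x)"
    by (simp add: inner_transpose_matrix_vector inner_commute del: transpose_matrix_vector)
qed

lemma finite_kkt_points:
  assumes "pos_def H"
  shows "finite {x. \<exists>S lam. kkt_sol H f A b S x lam}"
proof -
  define X where "X S = (THE x. \<exists>lam. kkt_sol H f A b S x lam)" for S
  have "{x. \<exists>S lam. kkt_sol H f A b S x lam} \<subseteq> range X"
  proof
    fix x assume "x \<in> {x. \<exists>S lam. kkt_sol H f A b S x lam}"
    then obtain S lam where kkt: "kkt_sol H f A b S x lam" by blast
    have "X S = x"
      unfolding X_def using kkt kkt_sol_unique[OF assms] by blast
    then show "x \<in> range X" by (metis rangeI)
  qed
  then show ?thesis by (rule finite_subset) simp
qed

section \<open>Lyapunov descent of the Douglas-Rachford step\<close>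

lemma tendsto_of_lyapunov_descent:
  fixes z :: "nat \<Rightarrow> 'a::real_normed_vector" and V :: "'a \<Rightarrow> real"
  assumes V_nonneg: "\<And>x. 0 \<le> V x" and "0 < \<mu>"
    and descent: "\<And>k. K \<le> k \<Longrightarrow> V (z (Suc k)) + \<mu> * (norm (z k - xs))\<^sup>2 \<le> V (z k)"
  shows "z \<longlonglongrightarrow> xs"
proof -
  define v where "v n = V (z (n + K))" for n
  define a where "a n = \<mu> * (norm (z (n + K) - xs))\<^sup>2" for n
  have a_nonneg: "0 \<le> a n" for n using \<open>0 < \<mu>\<close> by (simp add: a_def)
  have a_le: "a n \<le> v n - v (Suc n)" for n using descent[of "n + K"] by (simp add: a_def v_def)
  have "decseq v" using a_le a_nonneg by (intro decseq_SucI) (meson diff_ge_0_iff_ge order_trans)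
  then obtain L where "v \<longlonglongrightarrow> L" using decseq_convergent V_nonneg unfolding v_def by metis
  then have "(\<lambda>n. v n - v (Suc n)) \<longlonglongrightarrow> L - L" by (intro tendsto_diff LIMSEQ_Suc)
  then have "a \<longlonglongrightarrow> 0" using a_nonneg a_le by (intro real_tendsto_sandwich[of "\<lambda>_. 0" a]) auto
  then have "(\<lambda>n. (norm (z (n + K) - xs))\<^sup>2) \<longlonglongrightarrow> 0"
    using \<open>0 < \<mu>\<close> unfolding a_def by (simp add: tendsto_mult_left_iff)
  then have "(\<lambda>n. sqrt ((norm (z (n + K) - xs))\<^sup>2)) \<longlonglongrightarrow> 0" using tendsto_real_sqrt by fastforce
  then have "(\<lambda>n. z (n + K)) \<longlonglongrightarrow> xs" by (simp add: tendsto_norm_zero_iff LIM_zero_iff)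
  then show ?thesis by (rule LIMSEQ_offset)
qed

definition dr_M :: "real \<Rightarrow> real^'n^'n \<Rightarrow> real^'n^'n" where
  "dr_M \<rho> H = \<rho> *\<^sub>R mat 1 + H"

definition dr_R :: "real \<Rightarrow> real^'n^'n \<Rightarrow> real^'n^'n" where
  "dr_R \<rho> H = \<rho> *\<^sub>R mat 1 + (1/2) *\<^sub>R Hsym H"

definition dr_lyapunov :: "real \<Rightarrow> real^'n^'n \<Rightarrow> real^'n \<Rightarrow> real^'n \<Rightarrow> real" where
  "dr_lyapunov \<rho> H xs x =
     (dr_M \<rho> H *v (x - xs)) \<bullet> (matrix_inv (dr_R \<rho> H) *v (dr_M \<rho> H *v (x - xs)))"

lemma pos_def_dr_M: "0 < \<rho> \<Longrightarrow> pos_semidef H \<Longrightarrow> pos_def (dr_M \<rho> H)"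
  unfolding dr_M_def by (rule pos_def_scaled_identity_plus)

lemma pos_def_dr_R: "0 < \<rho> \<Longrightarrow> pos_semidef H \<Longrightarrow> pos_def (dr_R \<rho> H)"
  unfolding dr_R_def by (intro pos_def_scaled_identity_plus pos_semidef_scaleR pos_semidef_Hsym) simp_all

lemma transpose_dr_R: "transpose (dr_R \<rho> H) = dr_R \<rho> H"
  by (simp add: dr_R_def Hsym_def transpose_def mat_def vec_eq_iff)

lemma dr_M_z_update:
  assumes "invertible (dr_M \<rho> H)"
  shows "dr_M \<rho> H *v (z_update H \<rho> y z - xs) = dr_M \<rho> H *v (z - xs) + dr_R \<rho> H *v (y - z)"
proof -
  have "dr_M \<rho> H *v z_update H \<rho> y z = \<rho> *\<^sub>R y + H *v z + (1/2) *\<^sub>R (Hsym H *v (y - z))"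
    using matrix_inv_cancel(1)[OF assms] by (simp add: z_update_def dr_M_def)
  then show ?thesis
    by (simp add: dr_M_def dr_R_def matrix_vector_mult_diff_distrib matrix_vector_mult_add_rdistrib
        algebra_simps flip: scaleR_matrix_vector_assoc)
qed

lemma dr_descent_inequality:
  fixes H :: "real^'n^'n"
  assumes psd: "pos_semidef H" and "0 \<le> \<rho>"
    and vi: "(u + w) \<bullet> (Htil \<rho> H *v w + H *v u) \<le> 0"
  shows "2 * ((dr_M \<rho> H *v u) \<bullet> w) + w \<bullet> (dr_R \<rho> H *v w) + u \<bullet> (H *v u) \<le> 0"
proof -
  have "2 * ((dr_M \<rho> H *v u) \<bullet> w) + w \<bullet> (dr_R \<rho> H *v w) + u \<bullet> (H *v u)
      = 2 * ((u + w) \<bullet> (Htil \<rho> H *v w + H *v u))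
        - \<rho> * (w \<bullet> w) - (u + w) \<bullet> (H *v (u + w)) - (1/2) * (w \<bullet> (H *v w))"
    by (simp add: dr_M_def dr_R_def Htil_def inner_commute[of "_ *v u"] inner_scaled_identity_plus
        inner_Hsym matrix_vector_right_distrib inner_add_left inner_add_right algebra_simps
        flip: scaleR_matrix_vector_assoc)
  moreover have "0 \<le> \<rho> * (w \<bullet> w)" using \<open>0 \<le> \<rho>\<close> by simp
  moreover have "0 \<le> (u + w) \<bullet> (H *v (u + w))" "0 \<le> w \<bullet> (H *v w)"
    using psd unfolding pos_semidef_def by blast+
  ultimately show ?thesis using vi by linarith
qed

lemma dr_lyapunov_decrease:
  fixes H :: "real^'n^'n"
  assumes psd: "pos_semidef H" and "0 < \<rho>"
    and qp: "qp_min H f A b \<rho> z y" and sol: "avi_solution H f {x. feasible A b x} xs"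
  shows "dr_lyapunov \<rho> H xs (z_update H \<rho> y z) + (z - xs) \<bullet> (H *v (z - xs))
    \<le> dr_lyapunov \<rho> H xs z"
proof -
  define u w where "u = z - xs" and "w = y - z"
  have "0 \<le> (Htil \<rho> H *v y + ftil \<rho> H f z) \<bullet> (xs - y)"
    using qp_min_imp_avi_solution[OF qp] sol unfolding avi_solution_def by blast
  moreover have "0 \<le> (H *v xs + f) \<bullet> (y - xs)"
    using qp sol unfolding avi_solution_def qp_min_def by blast
  moreover have "(Htil \<rho> H *v y + ftil \<rho> H f z) \<bullet> (xs - y)
      = - ((u + w) \<bullet> (Htil \<rho> H *v w + H *v u)) - (H *v xs + f) \<bullet> (y - xs)"
    by (simp add: u_def w_def ftil_def matrix_vector_mult_diff_distrib matrix_vector_mult_diff_rdistrib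
        inner_add_left inner_add_right inner_diff_left inner_diff_right inner_commute)
  ultimately have "(u + w) \<bullet> (Htil \<rho> H *v w + H *v u) \<le> 0" by linarith
  then have descent: "2 * ((dr_M \<rho> H *v u) \<bullet> w) + w \<bullet> (dr_R \<rho> H *v w) + u \<bullet> (H *v u) \<le> 0"
    using psd \<open>0 < \<rho>\<close> by (intro dr_descent_inequality) simp_all
  have "dr_lyapunov \<rho> H xs (z_update H \<rho> y z)
      = dr_lyapunov \<rho> H xs z + 2 * ((dr_M \<rho> H *v u) \<bullet> w) + w \<bullet> (dr_R \<rho> H *v w)"
    unfolding dr_lyapunov_def
    using dr_M_z_update[OF pos_def_imp_invertible[OF pos_def_dr_M[OF \<open>0 < \<rho>\<close> psd]]]
      inverse_quadratic_form_shift[OF transpose_dr_R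
        pos_def_imp_invertible[OF pos_def_dr_R[OF \<open>0 < \<rho>\<close> psd]]]
    by (simp add: u_def w_def)
  with descent show ?thesis by (simp add: u_def)
qed

lemma dr_lyapunov_nonneg: "0 < \<rho> \<Longrightarrow> pos_semidef H \<Longrightarrow> 0 \<le> dr_lyapunov \<rho> H xs x"
  using pos_def_dr_R[of \<rho> H]
  by (simp add: dr_lyapunov_def inverse_quadratic_form_nonneg pos_def_imp_pos_semidef
      pos_def_imp_invertible)

lemma dr_iteration_converges:
  assumes pd: "pos_def H" and "0 < \<rho>" and sol: "avi_solution H f {x. feasible A b x} xs"
    and iter: "\<And>k. K \<le> k \<Longrightarrow>
      qp_min H f A b \<rho> (z k) (y k) \<and> z (Suc k) = z_update H \<rho> (y k) (z k)"
  shows "z \<longlonglongrightarrow> xs"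
proof -
  have psd: "pos_semidef H" using pd by (rule pos_def_imp_pos_semidef)
  obtain \<mu> where "0 < \<mu>" and coercive: "\<And>x. \<mu> * (norm x)\<^sup>2 \<le> x \<bullet> (H *v x)"
    using pos_def_coercive[OF pd] by blast
  show ?thesis
  proof (rule tendsto_of_lyapunov_descent[where V = "dr_lyapunov \<rho> H xs"])
    show "0 \<le> dr_lyapunov \<rho> H xs x" for x using \<open>0 < \<rho>\<close> psd by (rule dr_lyapunov_nonneg)
    fix k assume "K \<le> k"
    then have "dr_lyapunov \<rho> H xs (z (Suc k)) + (z k - xs) \<bullet> (H *v (z k - xs))
        \<le> dr_lyapunov \<rho> H xs (z k)"
      using iter dr_lyapunov_decrease[OF psd \<open>0 < \<rho>\<close> _ sol] by simp
    with coercive[of "z k - xs"]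
    show "dr_lyapunov \<rho> H xs (z (Suc k)) + \<mu> * (norm (z k - xs))\<^sup>2 \<le> dr_lyapunov \<rho> H xs (z k)"
      by linarith
  qed (fact \<open>0 < \<mu>\<close>)
qed

section \<open>Runs of DR-DAQP\<close>

lemma finite_strict_descent_indices:
  fixes \<delta> :: "nat \<Rightarrow> 'a::linorder"
  assumes "decseq \<delta>" "finite F"
    and descent: "\<And>k. k \<in> D \<Longrightarrow> \<delta> (Suc k) < \<delta> k \<and> \<delta> (Suc k) \<in> F"
  shows "finite D"
proof -
  have less: "\<delta> (Suc k2) < \<delta> (Suc k1)" if "k1 < k2" "k2 \<in> D" for k1 k2
    using descent[OF \<open>k2 \<in> D\<close>] decseqD[OF \<open>decseq \<delta>\<close>, of "Suc k1" k2] that(1)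
    by (auto intro: order.strict_trans2)
  have "inj_on (\<lambda>k. \<delta> (Suc k)) D"
    by (rule inj_onI) (metis less linorder_neq_iff order_less_irrefl)
  moreover have "(\<lambda>k. \<delta> (Suc k)) ` D \<subseteq> F" using descent by blast
  ultimately show ?thesis using \<open>finite F\<close> by (metis finite_imageD finite_subset)
qed

lemma drdaqp_iter_step:
  assumes "drdaqp_iter H f A b \<rho> Aprev zin \<delta>in y z Act \<delta>out znext"
  shows "qp_min H f A b \<rho> z y" and "znext = z_update H \<rho> y z" and "\<delta>out \<le> \<delta>in"
  using assms unfolding drdaqp_iter_def by (auto split: if_splits)

lemma drdaqp_iter_replacement:
  assumes "drdaqp_iter H f A b \<rho> Aprev zin \<delta>in y z Act \<delta>out znext" and "z \<noteq> zin"
  shows "\<exists>S lam. kkt_sol H f A b S z lam" and "\<delta>out = ereal (norm (y - z))" and "\<delta>out < \<delta>in"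
  using assms unfolding drdaqp_iter_def by (auto split: if_splits)

lemma drdaqp_run_iter:
  assumes "\<forall>K. drdaqp_prefix H f A b \<rho> K zin y z Act \<delta>"
  shows "drdaqp_iter H f A b \<rho> (if k = 0 then None else Some (Act (k - 1)))
           (zin k) (\<delta> k) (y k) (z k) (Act k) (\<delta> (Suc k)) (zin (Suc k))"
  using assms[rule_format, of "Suc k"] unfolding drdaqp_prefix_def by (metis lessI)

lemma drdaqp_finitely_many_replacements:
  assumes "pos_def H" "0 < \<rho>" and run: "\<forall>K. drdaqp_prefix H f A b \<rho> K zin y z Act \<delta>"
  shows "finite {k. z k \<noteq> zin k}"
proof -
  note iter = drdaqp_run_iter[OF run]
  define Y where "Y x = (THE y. qp_min H f A b \<rho> x y)" for x
  define residuals where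
    "residuals = (\<lambda>x. ereal (norm (Y x - x))) ` {x. \<exists>S lam. kkt_sol H f A b S x lam}"
  have Y: "Y (z k) = y k" for k
    unfolding Y_def
  proof (rule the_equality)
    show qp: "qp_min H f A b \<rho> (z k) (y k)" by (rule drdaqp_iter_step(1)[OF iter])
    show "y' = y k" if "qp_min H f A b \<rho> (z k) y'" for y'
      using \<open>0 < \<rho>\<close> pos_def_imp_pos_semidef[OF \<open>pos_def H\<close>] that qp by (rule qp_min_unique)
  qed
  show ?thesis
  proof (rule finite_strict_descent_indices[where F = residuals])
    show "decseq \<delta>" by (rule decseq_SucI) (rule drdaqp_iter_step(3)[OF iter])
    show "finite residuals"
      unfolding residuals_def using finite_kkt_points[OF \<open>pos_def H\<close>] by (rule finite_imageI)
    fix k assume "k \<in> {k. z k \<noteq> zin k}"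
    then have "z k \<noteq> zin k" by simp
    note replacement = drdaqp_iter_replacement[OF iter[of k] this]
    have "\<delta> (Suc k) \<in> residuals"
      unfolding residuals_def
      by (rule rev_image_eqI[of "z k"]) (use replacement(1) in simp, simp add: replacement(2) Y)
    with replacement(3) show "\<delta> (Suc k) < \<delta> k \<and> \<delta> (Suc k) \<in> residuals" by simp
  qed
qed

lemma drdaqp_run_converges:
  assumes "pos_def H" "0 < \<rho>" and sol: "avi_solution H f {x. feasible A b x} xs"
    and run: "\<forall>K. drdaqp_prefix H f A b \<rho> K zin y z Act \<delta>"
  shows "z \<longlonglongrightarrow> xs"
proof -
  obtain K where "{k. z k \<noteq> zin k} \<subseteq> {..<K}"
    using drdaqp_finitely_many_replacements[OF assms(1,2) run] finite_nat_bounded by blast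
  then have plain: "z k = zin k" if "K \<le> k" for k using that by auto
  note iter = drdaqp_iter_step[OF drdaqp_run_iter[OF run]]
  show ?thesis
  proof (rule dr_iteration_converges[OF assms(1-3)])
    fix k assume "K \<le> k"
    then show "qp_min H f A b \<rho> (z k) (y k) \<and> z (Suc k) = z_update H \<rho> (y k) (z k)"
      using iter(1,2)[of k] plain[of "Suc k"] by simp
  qed
qed

lemma drdaqp_stop_solution:
  assumes "pos_def H" and sol: "avi_solution H f {x. feasible A b x} xs"
    and "drdaqp_stop H f A b \<rho> Aprev zin zt lam"
  shows "zt = xs"
proof -
  obtain S where "kkt_sol H f A b S zt lam" "stop_test A b S zt lam"
    using assms(3) unfolding drdaqp_stop_def by blast
  then have "avi_solution H f {x. feasible A b x} zt" by (rule kkt_stop_imp_avi_solution)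
  from assms(1) this sol show ?thesis by (rule avi_solution_unique)
qed

theorem theorem1:
  fixes H :: "real^'n^'n" and f :: "real^'n" and A :: "real^'n^'m" and b :: "real^'m"
    and \<rho> :: real and xstar :: "real^'n"
  assumes nonempty: "\<exists>x. feasible A b x"
    and posdef: "\<forall>x. x \<noteq> 0 \<longrightarrow> x \<bullet> ((H + transpose H) *v x) > 0"
    and rho: "\<rho> > 0"
    and avi: "feasible A b xstar \<and>
              (\<forall>y. feasible A b y \<longrightarrow> (H *v xstar + f) \<bullet> (y - xstar) \<ge> 0)"
  shows "(\<forall>zin y z Act \<delta>. (\<forall>K. drdaqp_prefix H f A b \<rho> K zin y z Act \<delta>)
            \<longrightarrow> z \<longlonglongrightarrow> xstar) \<and>
         (\<forall>K zin y z Act \<delta> zt lam. drdaqp_prefix H f A b \<rho> K zin y z Act \<delta> \<and>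
            drdaqp_stop H f A b \<rho> (if K = 0 then None else Some (Act (K - 1))) (zin K) zt lam
            \<longrightarrow> zt = xstar)"
proof -
  have "pos_def (H + transpose H)" using posdef unfolding pos_def_def .
  then have pd: "pos_def H" by (rule pos_def_of_symmetric_part)
  have sol: "avi_solution H f {x. feasible A b x} xstar"
    using avi by (simp add: avi_solution_def)
  show ?thesis
  proof (intro conjI allI impI)
    fix zin y z \<delta> and Act :: "nat \<Rightarrow> 'm set"
    assume "\<forall>K. drdaqp_prefix H f A b \<rho> K zin y z Act \<delta>"
    then show "z \<longlonglongrightarrow> xstar" by (rule drdaqp_run_converges[OF pd rho sol])
  next
    fix K zin y z \<delta> zt lam and Act :: "nat \<Rightarrow> 'm set"
    assume "drdaqp_prefix H f A b \<rho> K zin y z Act \<delta> \<and>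
      drdaqp_stop H f A b \<rho> (if K = 0 then None else Some (Act (K - 1))) (zin K) zt lam"
    then show "zt = xstar" using drdaqp_stop_solution[OF pd sol] by (elim conjE)
  qed
qed

end
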